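(* Let $n$ be a positive integer such that $0.2n$, $0.45n$, $0.35n$ are integers. Consider the population of $n$ users consisting of $0.2n$ users with speech point $2$ and interval $[2,4]$, $0.45n$ users with speech point $3$ and interval $[2,3]$, and $0.35n$ users with speech point $4$ and interval $[3,4]$, all with participation threshold $\theta_i=2/3$, and no moderation window (no user banned). Then there is no stable set of users: for every $\mathcal S\subseteq[n]$, either some $i\in\mathcal S$ has negative utility with respect to $\mathcal S$ or some $j\notin\mathcal S$ has nonnegative utility with respect to $\mathcal S$.
   Context: For a set $\mathcal S$ of users on the platform, user $i$ (with interval $[l_i,r_i]$ and threshold $\theta_i$) has nonnegative utility with respect to $\mathcal S$ iff $|\{j\in\mathcal S\setminus\{i\}:p_j\in[l_i,r_i]\}|\ge\theta_i|\mathcal S\setminus\{i\}|$ (in particular utility is nonnegative when $\mathcal S\setminus\{i\}=\emptyset$), and negative otherwise. A set $\mathcal S$ is stable if all $i\in\mathcal S$ have nonnegative utility with respect to $\mathcal S$ and all $j\notin\mathcal S$ have negative utility with respect to $\mathcal S$. *)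

theory Defs
  imports Complex_Main
begin

text \<open>Users are indexed by 0..<n (representing [n]). User i has speech point p i,
  interval [l i, r i] and threshold th i.\<close>

definition nonneg_utility ::
  "(nat \<Rightarrow> real) \<Rightarrow> (nat \<Rightarrow> real) \<Rightarrow> (nat \<Rightarrow> real) \<Rightarrow> (nat \<Rightarrow> real) \<Rightarrow> nat set \<Rightarrow> nat \<Rightarrow> bool" where
  "nonneg_utility p l r th S i \<longleftrightarrow>
     real (card {j \<in> S - {i}. l i \<le> p j \<and> p j \<le> r i}) \<ge> th i * real (card (S - {i}))"

definition stable ::
  "nat \<Rightarrow> (nat \<Rightarrow> real) \<Rightarrow> (nat \<Rightarrow> real) \<Rightarrow> (nat \<Rightarrow> real) \<Rightarrow> (nat \<Rightarrow> real) \<Rightarrow> nat set \<Rightarrow> bool" where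
  "stable n p l r th S \<longleftrightarrow> S \<subseteq> {0..<n} \<and>
     (\<forall>i\<in>S. nonneg_utility p l r th S i) \<and>
     (\<forall>j\<in>{0..<n} - S. \<not> nonneg_utility p l r th S j)"

end

theory Submission
  imports Defs
begin

text \<open>A user who approves of every speech point
  present always has nonnegative utility, so she belongs to every stable set; and a member of
  a stable set who approves of her own point passes her nonnegative utility on to an outsider of
  the same type, since that outsider sees one more approved user and one more user overall. In
  the population at hand the users of point 2 approve of everybody and every type approves of
  itself, so a stable set is the union of the point-2 users with some of the other two types.
  Each of the four candidates is destabilised by one user: with the proportions 20 : 45 : 35, the
  point-3 users are too few to be content with everyone present and the point-4 users are too few
  to be content without the point-3 users, while the point-3 users are attracted by the point-2
  users alone and the point-4 users by the point-3 users alone.\<close>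

lemma nonneg_utility_if_approves_all:
  assumes "th i \<le> 1" and "\<forall>j\<in>S - {i}. l i \<le> p j \<and> p j \<le> r i"
  shows "nonneg_utility p l r th S i"
proof -
  have "{j \<in> S - {i}. l i \<le> p j \<and> p j \<le> r i} = S - {i}"
    using assms(2) by blast
  moreover have "th i * real (card (S - {i})) \<le> real (card (S - {i}))"
    using mult_right_mono[OF assms(1), of "real (card (S - {i}))"] by simp
  ultimately show ?thesis
    unfolding nonneg_utility_def by simp
qed

lemma nonneg_utility_transfer_to_outsider:
  assumes "finite S" and "i \<in> S" and "j \<notin> S"
    and "nonneg_utility p l r th S i"
    and "l j = l i" and "r j = r i" and "th j = th i" and "th i \<le> 1"
    and "l i \<le> p i" and "p i \<le> r i"
  shows "nonneg_utility p l r th S j"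
proof -
  let ?approved = "{k \<in> S - {i}. l i \<le> p k \<and> p k \<le> r i}"
  have "{k \<in> S - {j}. l j \<le> p k \<and> p k \<le> r j} = insert i ?approved"
    using assms(2,3,5,6,9,10) by auto
  then have approved_j: "card {k \<in> S - {j}. l j \<le> p k \<and> p k \<le> r j} = card ?approved + 1"
    using assms(1) by simp
  have others_j: "card (S - {j}) = card (S - {i}) + 1"
    using assms(1-3) card_Suc_Diff1[of S i] by simp
  have "th i * real (card (S - {i})) \<le> real (card ?approved)"
    using assms(4) unfolding nonneg_utility_def by simp
  then show ?thesis
    unfolding nonneg_utility_def approved_j others_j assms(7)
    using assms(8) by (simp add: distrib_left)
qed

lemma stable_subset_users: "stable n p l r th S \<Longrightarrow> S \<subseteq> {..<n}"
  unfolding stable_def atLeast0LessThan by (elim conjE)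

lemma stable_finite: "stable n p l r th S \<Longrightarrow> finite S"
  using finite_subset[OF stable_subset_users] by blast

lemma stable_member_nonneg_utility:
  "stable n p l r th S \<Longrightarrow> i \<in> S \<Longrightarrow> nonneg_utility p l r th S i"
  unfolding stable_def by blast

lemma stable_outsider_negative_utility:
  "stable n p l r th S \<Longrightarrow> j < n \<Longrightarrow> j \<notin> S \<Longrightarrow> \<not> nonneg_utility p l r th S j"
  unfolding stable_def by simp

lemma stable_contains_approver_of_all:
  assumes "stable n p l r th S" and "j < n" and "th j \<le> 1"
    and "\<forall>k\<in>S. l j \<le> p k \<and> p k \<le> r j"
  shows "j \<in> S"
proof (rule ccontr)
  assume "j \<notin> S"
  have "nonneg_utility p l r th S j"
    using assms(3,4) by (intro nonneg_utility_if_approves_all) auto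
  with stable_outsider_negative_utility[OF assms(1,2) \<open>j \<notin> S\<close>] show False ..
qed

lemma stable_contains_same_type:
  assumes "stable n p l r th S" and "i \<in> S" and "j < n"
    and "l j = l i" and "r j = r i" and "th j = th i" and "th i \<le> 1"
    and "l i \<le> p i" and "p i \<le> r i"
  shows "j \<in> S"
proof (rule ccontr)
  assume "j \<notin> S"
  have "nonneg_utility p l r th S j"
    using nonneg_utility_transfer_to_outsider[OF stable_finite[OF assms(1)] assms(2) \<open>j \<notin> S\<close>
        stable_member_nonneg_utility[OF assms(1,2)]] assms(4-9) by blast
  with stable_outsider_negative_utility[OF assms(1,3) \<open>j \<notin> S\<close>] show False ..
qed

locale three_type_population =
  fixes n a b c :: nat and p l r th :: "nat \<Rightarrow> real"
  assumes n_pos: "n > 0"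
    and a_eq: "real a = 0.2 * real n" and b_eq: "real b = 0.45 * real n"
    and c_eq: "real c = 0.35 * real n"
    and type_A: "\<And>i. i < a \<Longrightarrow> p i = 2 \<and> l i = 2 \<and> r i = 4"
    and type_B: "\<And>i. a \<le> i \<Longrightarrow> i < a + b \<Longrightarrow> p i = 3 \<and> l i = 2 \<and> r i = 3"
    and type_C: "\<And>i. a + b \<le> i \<Longrightarrow> i < n \<Longrightarrow> p i = 4 \<and> l i = 3 \<and> r i = 4"
    and th_eq: "\<And>i. i < n \<Longrightarrow> th i = 2 / 3"
begin

lemma type_sizes: "n = a + b + c" "4 * b = 9 * a" "4 * c = 7 * a" "a > 0"
proof -
  have "real n = real (a + b + c)" "real (4 * b) = real (9 * a)" "real (4 * c) = real (7 * a)"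
    using a_eq b_eq c_eq by simp_all
  then show "n = a + b + c" "4 * b = 9 * a" "4 * c = 7 * a"
    using of_nat_eq_iff by blast+
  show "a > 0"
    using a_eq n_pos by simp
qed

lemma point_cases:
  assumes "k < n"
  shows "k < a \<and> p k = 2 \<or> a \<le> k \<and> k < a + b \<and> p k = 3 \<or> a + b \<le> k \<and> p k = 4"
  using assms type_A[of k] type_B[of k] type_C[of k] by linarith

lemma points_between_2_and_4:
  assumes "k < n"
  shows "2 \<le> p k \<and> p k \<le> 4"
  using point_cases[OF assms] by auto

lemma nonneg_utility_iff_counts:
  assumes "i < n"
  shows "nonneg_utility p l r th S i \<longleftrightarrow>
    2 * card (S - {i}) \<le> 3 * card {k \<in> S - {i}. l i \<le> p k \<and> p k \<le> r i}"
  unfolding nonneg_utility_def th_eq[OF assms] by linarith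

lemma nonneg_utility_type_B:
  assumes "S \<subseteq> {..<n}" and "a \<le> i" and "i < a + b"
  shows "nonneg_utility p l r th S i \<longleftrightarrow> 2 * card (S - {i}) \<le> 3 * card ({k \<in> S. k < a + b} - {i})"
proof -
  have "(l i \<le> p k \<and> p k \<le> r i) \<longleftrightarrow> k < a + b" if "k \<in> S" for k
    using point_cases[of k] subsetD[OF assms(1) that] type_B[of i] assms(2,3) by auto
  then have approved: "{k \<in> S - {i}. l i \<le> p k \<and> p k \<le> r i} = {k \<in> S. k < a + b} - {i}"
    by blast
  have "i < n"
    using assms(3) type_sizes(1) by simp
  show ?thesis
    by (simp only: nonneg_utility_iff_counts[OF \<open>i < n\<close>] approved)
qed

lemma nonneg_utility_type_C:
  assumes "S \<subseteq> {..<n}" and "a + b \<le> i" and "i < n"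
  shows "nonneg_utility p l r th S i \<longleftrightarrow> 2 * card (S - {i}) \<le> 3 * card ({k \<in> S. a \<le> k} - {i})"
proof -
  have "(l i \<le> p k \<and> p k \<le> r i) \<longleftrightarrow> a \<le> k" if "k \<in> S" for k
    using point_cases[of k] subsetD[OF assms(1) that] type_C[of i] assms(2,3) by auto
  then have approved: "{k \<in> S - {i}. l i \<le> p k \<and> p k \<le> r i} = {k \<in> S. a \<le> k} - {i}"
    by blast
  show ?thesis
    by (simp only: nonneg_utility_iff_counts[OF assms(3)] approved)
qed

lemma stable_contains_type_A:
  assumes "stable n p l r th S"
  shows "{..<a} \<subseteq> S"
proof
  fix i assume "i \<in> {..<a}"
  then have "i < n" "l i = 2" "r i = 4"
    using type_A type_sizes(1) by auto
  moreover have "\<forall>k\<in>S. 2 \<le> p k \<and> p k \<le> 4"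
    using stable_subset_users[OF assms] points_between_2_and_4 by auto
  ultimately show "i \<in> S"
    using stable_contains_approver_of_all[OF assms] th_eq by simp
qed

lemma stable_type_B_all_or_none:
  assumes "stable n p l r th S"
  shows "{a..<a + b} \<subseteq> S \<or> {a..<a + b} \<inter> S = {}"
proof (rule disjCI)
  assume "{a..<a + b} \<inter> S \<noteq> {}"
  then obtain i where "i \<in> S" "a \<le> i" "i < a + b"
    by auto
  show "{a..<a + b} \<subseteq> S"
  proof
    fix j assume "j \<in> {a..<a + b}"
    then show "j \<in> S"
      using stable_contains_same_type[OF assms \<open>i \<in> S\<close>] \<open>a \<le> i\<close> \<open>i < a + b\<close>
        type_B[of i] type_B[of j] th_eq type_sizes(1) by auto
  qed
qed

lemma stable_type_C_all_or_none:
  assumes "stable n p l r th S"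
  shows "{a + b..<n} \<subseteq> S \<or> {a + b..<n} \<inter> S = {}"
proof (rule disjCI)
  assume "{a + b..<n} \<inter> S \<noteq> {}"
  then obtain i where "i \<in> S" "a + b \<le> i" "i < n"
    by auto
  show "{a + b..<n} \<subseteq> S"
  proof
    fix j assume "j \<in> {a + b..<n}"
    then show "j \<in> S"
      using stable_contains_same_type[OF assms \<open>i \<in> S\<close>] \<open>a + b \<le> i\<close> \<open>i < n\<close>
        type_C[of i] type_C[of j] th_eq by auto
  qed
qed

lemma stable_cases:
  assumes "stable n p l r th S"
  obtains "S = {..<a}" | "S = {..<a + b}" | "S = {..<a} \<union> {a + b..<n}" | "S = {..<n}"
proof -
  have "S \<subseteq> {..<a} \<union> {a..<a + b} \<union> {a + b..<n}"
    using stable_subset_users[OF assms] type_sizes(1) by auto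
  with stable_contains_type_A[OF assms] have "S = {..<a} \<union> ({a..<a + b} \<inter> S) \<union> ({a + b..<n} \<inter> S)"
    by auto
  with stable_type_B_all_or_none[OF assms] stable_type_C_all_or_none[OF assms] type_sizes(1)
  show thesis
    by (elim disjE) (simp_all add: that Int_absorb2 ivl_disj_un)
qed

lemma not_stable: "\<not> stable n p l r th S"
proof
  assume stable: "stable n p l r th S"
  then have users: "S \<subseteq> {..<n}"
    by (rule stable_subset_users)
  have "b > 0" "c > 0" and n_eq: "n = a + b + c"
    using type_sizes by simp_all
  then have "a < n" "a + b < n"
    by simp_all
  from stable show False
  proof (cases rule: stable_cases)
    case 1
    have "\<forall>k\<in>S. l a \<le> p k \<and> p k \<le> r a"
      using 1 type_A type_B[of a] \<open>b > 0\<close> by auto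
    then have "a \<in> S"
      using stable_contains_approver_of_all[OF stable \<open>a < n\<close>] th_eq[OF \<open>a < n\<close>] by simp
    then show False
      using 1 by simp
  next
    case 2
    have "{k \<in> S. a \<le> k} - {a + b} = {a..<a + b}" "S - {a + b} = S"
      using 2 by auto
    then have "card ({k \<in> S. a \<le> k} - {a + b}) = b" "card (S - {a + b}) = a + b"
      using 2 by simp_all
    moreover have "2 * (a + b) \<le> 3 * b"
      using type_sizes by arith
    ultimately have "nonneg_utility p l r th S (a + b)"
      using nonneg_utility_type_C[OF users order_refl \<open>a + b < n\<close>] by simp
    moreover have "a + b \<notin> S"
      using 2 by simp
    ultimately show False
      using stable_outsider_negative_utility[OF stable \<open>a + b < n\<close>] by blast
  next
    case 3
    have "{k \<in> S. a \<le> k} - {a + b} = {Suc (a + b)..<n}"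
      "S - {a + b} = {..<a} \<union> {Suc (a + b)..<n}"
      using 3 by auto
    moreover have "card ({..<a} \<union> {Suc (a + b)..<n}) = a + (n - Suc (a + b))"
      by (subst card_Un_disjoint) auto
    ultimately have "card ({k \<in> S. a \<le> k} - {a + b}) = n - Suc (a + b)"
      "card (S - {a + b}) = a + (n - Suc (a + b))"
      by simp_all
    moreover have "\<not> 2 * (a + (n - Suc (a + b))) \<le> 3 * (n - Suc (a + b))"
      using type_sizes by arith
    ultimately have "\<not> nonneg_utility p l r th S (a + b)"
      using nonneg_utility_type_C[OF users order_refl \<open>a + b < n\<close>] by simp
    moreover have "a + b \<in> S"
      using 3 \<open>a + b < n\<close> by simp
    ultimately show False
      using stable_member_nonneg_utility[OF stable] by blast
  next
    case 4
    have "{k \<in> S. k < a + b} - {a} = {..<a + b} - {a}"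
      using 4 n_eq by auto
    then have "card ({k \<in> S. k < a + b} - {a}) = a + b - 1" "card (S - {a}) = n - 1"
      using 4 \<open>a < n\<close> \<open>b > 0\<close> by simp_all
    moreover have "\<not> 2 * (n - 1) \<le> 3 * (a + b - 1)"
      using type_sizes by arith
    ultimately have "\<not> nonneg_utility p l r th S a"
      using nonneg_utility_type_B[OF users order_refl] \<open>b > 0\<close> by simp
    moreover have "a \<in> S"
      using 4 \<open>a < n\<close> by simp
    ultimately show False
      using stable_member_nonneg_utility[OF stable] by blast
  qed
qed

end

theorem proposition12:
  fixes n a b c :: nat and p l r th :: "nat \<Rightarrow> real"
  assumes "n > 0"
    and "real a = 0.2 * real n" and "real b = 0.45 * real n" and "real c = 0.35 * real n"
    and "\<And>i. i < a \<Longrightarrow> p i = 2 \<and> l i = 2 \<and> r i = 4"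
    and "\<And>i. a \<le> i \<Longrightarrow> i < a + b \<Longrightarrow> p i = 3 \<and> l i = 2 \<and> r i = 3"
    and "\<And>i. a + b \<le> i \<Longrightarrow> i < n \<Longrightarrow> p i = 4 \<and> l i = 3 \<and> r i = 4"
    and "\<And>i. i < n \<Longrightarrow> th i = 2 / 3"
  shows "\<forall>S. S \<subseteq> {0..<n} \<longrightarrow>
           (\<exists>i\<in>S. \<not> nonneg_utility p l r th S i) \<or>
           (\<exists>j\<in>{0..<n} - S. nonneg_utility p l r th S j)"
proof -
  interpret three_type_population n a b c p l r th
    using assms by unfold_locales
  show ?thesis
    using not_stable unfolding stable_def by blast
qed

end
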